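(* Let $R$ be an integral domain with field of fractions $\mathbb{Q}(R)$, let $M$ be a torsion-free $R$-module, and let $M_{\mathbb{Q}}=M\otimes_R\mathbb{Q}(R)$. Then the map $\mathbb{P}(M)\to\mathbb{P}(M_{\mathbb{Q}})$, $[m]\mapsto[m\otimes1]$, is a well-defined bijection.
   Context: For a module $N$ over an integral domain $S$, let $N^\circ=N\setminus\{0\}$; define $x\sim'y$ on $N^\circ$ if there exist $m\in N$ and $r,s\in S$ with $x=rm$, $y=sm$; let $\sim$ be the equivalence relation generated by $\sim'$; and let $\mathbb{P}(N)=N^\circ/\sim$. For $M_{\mathbb{Q}}$ this is taken over the ring $\mathbb{Q}(R)$, where it coincides with the usual projective space of the $\mathbb{Q}(R)$-vector space. $M$ is torsion-free if $rm=0$ with $r\ne0$ implies $m=0$. *)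

theory Defs
  imports Complex_Main "HOL-Computational_Algebra.Fraction_Field"
begin

definition proj_rel :: "('r \<Rightarrow> 'm \<Rightarrow> 'm) \<Rightarrow> 'm set \<Rightarrow> 'm \<Rightarrow> 'm \<Rightarrow> 'm \<Rightarrow> bool" where
  "proj_rel sc N z x y \<longleftrightarrow> x \<in> N \<and> y \<in> N \<and> x \<noteq> z \<and> y \<noteq> z \<and>
     (\<exists>m\<in>N. \<exists>r s. x = sc r m \<and> y = sc s m)"

definition proj_class :: "('r \<Rightarrow> 'm \<Rightarrow> 'm) \<Rightarrow> 'm set \<Rightarrow> 'm \<Rightarrow> 'm \<Rightarrow> 'm set" where
  "proj_class sc N z x = {y. equivclp (proj_rel sc N z) x y}"

definition proj_space :: "('r \<Rightarrow> 'm \<Rightarrow> 'm) \<Rightarrow> 'm set \<Rightarrow> 'm \<Rightarrow> 'm set set" where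
  "proj_space sc N z = proj_class sc N z ` (N - {z})"

definition torsion_free :: "('a::idom \<Rightarrow> 'b::ab_group_add \<Rightarrow> 'b) \<Rightarrow> bool" where
  "torsion_free sc \<longleftrightarrow> (\<forall>r m. r \<noteq> 0 \<longrightarrow> sc r m = 0 \<longrightarrow> m = 0)"

text \<open>M tensor Q(R), realised as the localisation S^{-1}M with S = R - {0}:
  classes of pairs (m, s), s nonzero, with (m,s) ~ (m',s') iff t(s'm - sm') = 0 for some t nonzero.\<close>

definition loc_rel :: "('a::idom \<Rightarrow> 'b::ab_group_add \<Rightarrow> 'b) \<Rightarrow> (('b \<times> 'a) \<times> ('b \<times> 'a)) set" where
  "loc_rel sc = {((m, s), (m', s')). s \<noteq> 0 \<and> s' \<noteq> 0 \<and>
       (\<exists>t. t \<noteq> 0 \<and> sc t (sc s' m - sc s m') = 0)}"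

definition loc_class :: "('a::idom \<Rightarrow> 'b::ab_group_add \<Rightarrow> 'b) \<Rightarrow> 'b \<Rightarrow> 'a \<Rightarrow> ('b \<times> 'a) set" where
  "loc_class sc m s = loc_rel sc `` {(m, s)}"

definition loc_carrier :: "('a::idom \<Rightarrow> 'b::ab_group_add \<Rightarrow> 'b) \<Rightarrow> ('b \<times> 'a) set set" where
  "loc_carrier sc = (UNIV \<times> {s. s \<noteq> 0}) // loc_rel sc"

definition loc_zero :: "('a::idom \<Rightarrow> 'b::ab_group_add \<Rightarrow> 'b) \<Rightarrow> ('b \<times> 'a) set" where
  "loc_zero sc = loc_class sc 0 1"

definition loc_scale :: "('a::idom \<Rightarrow> 'b::ab_group_add \<Rightarrow> 'b) \<Rightarrow> 'a fract \<Rightarrow> ('b \<times> 'a) set \<Rightarrow> ('b \<times> 'a) set" where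
  "loc_scale sc q X = \<Union>{loc_class sc (sc a m) (b * s) | a b m s. b \<noteq> 0 \<and> q = Fract a b \<and> (m, s) \<in> X}"

end

theory Submission
  imports Defs
begin

(* Over a domain, two nonzero vectors x, y of a torsion-free module M lie in the same point
   of P(M) iff they are commensurable, i.e. a x = b y for nonzero scalars a, b: a single
   ~'-step x = r m, y = s m gives s x = r y, and conversely x ~' a x = b y ~' y.
   Commensurability is already an equivalence relation, so it is the generated one.
   In M_Q the same holds for the vectors m/1, since torsion-freeness makes every
   representative (m', s') of a class m/s have a numerator commensurable with m.
   Finally every nonzero m/s is ~'-related to s (m/s) = m/1, so [m] |-> [m/1] is onto. *)

lemma equivclp_imp_equivp_image:
  assumes "equivclp r x y"
    and "\<And>u v. r u v \<Longrightarrow> R (f u) (f v)"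
    and "equivp R"
  shows "R (f x) (f y)"
  using assms(1)
proof (induction rule: equivclp_induct)
  case base
  show ?case using \<open>equivp R\<close> by (rule equivp_reflp)
next
  case (step u v)
  then show ?case
    using \<open>equivp R\<close> assms(2) by (metis equivp_symp equivp_transp)
qed

lemma equivclp_class_eq_iff:
  "{z. equivclp r x z} = {z. equivclp r y z} \<longleftrightarrow> equivclp r x y"
proof
  assume "{z. equivclp r x z} = {z. equivclp r y z}"
  then show "equivclp r x y" by (metis equivclp_refl mem_Collect_eq)
next
  assume "equivclp r x y"
  then show "{z. equivclp r x z} = {z. equivclp r y z}"
    by (blast intro: equivclp_trans equivclp_sym)
qed

definition equivclp_class_map :: "('b \<Rightarrow> 'b \<Rightarrow> bool) \<Rightarrow> ('a \<Rightarrow> 'b) \<Rightarrow> 'a set \<Rightarrow> 'a set \<Rightarrow> 'b set"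
  where "equivclp_class_map Q f A C = (\<Union>x\<in>C \<inter> A. {Z. equivclp Q (f x) Z})"

lemma equivclp_class_map_class:
  assumes "x \<in> A"
    and preserves: "\<And>y. y \<in> A \<Longrightarrow> equivclp P x y \<Longrightarrow> equivclp Q (f x) (f y)"
  shows "equivclp_class_map Q f A {y. equivclp P x y} = {Z. equivclp Q (f x) Z}"
proof (intro set_eqI iffI)
  fix Z
  assume "Z \<in> equivclp_class_map Q f A {y. equivclp P x y}"
  then obtain y where "y \<in> A" "equivclp P x y" and "equivclp Q (f y) Z"
    unfolding equivclp_class_map_def by blast
  with preserves show "Z \<in> {Z. equivclp Q (f x) Z}"
    by (blast intro: equivclp_trans)
next
  fix Z
  assume "Z \<in> {Z. equivclp Q (f x) Z}"
  moreover from \<open>x \<in> A\<close> have "x \<in> {y. equivclp P x y} \<inter> A" by simp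
  ultimately show "Z \<in> equivclp_class_map Q f A {y. equivclp P x y}"
    unfolding equivclp_class_map_def by blast
qed

lemma bij_betw_equivclp_class_map:
  assumes maps: "f ` A \<subseteq> B"
    and reflects: "\<And>x y. x \<in> A \<Longrightarrow> y \<in> A \<Longrightarrow> equivclp Q (f x) (f y) \<longleftrightarrow> equivclp P x y"
    and onto: "\<And>Y. Y \<in> B \<Longrightarrow> \<exists>x\<in>A. equivclp Q Y (f x)"
  shows "bij_betw (equivclp_class_map Q f A)
    ((\<lambda>x. {y. equivclp P x y}) ` A) ((\<lambda>Y. {Z. equivclp Q Y Z}) ` B)"
proof -
  have class_image: "equivclp_class_map Q f A {y. equivclp P x y} = {Z. equivclp Q (f x) Z}"
    if "x \<in> A" for x
    by (rule equivclp_class_map_class[OF that]) (simp add: reflects that)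
  show ?thesis
  proof (rule bij_betw_imageI)
    show "inj_on (equivclp_class_map Q f A) ((\<lambda>x. {y. equivclp P x y}) ` A)"
    proof (rule inj_onI)
      fix C D
      assume "C \<in> (\<lambda>x. {y. equivclp P x y}) ` A" "D \<in> (\<lambda>x. {y. equivclp P x y}) ` A"
      then obtain x y where "x \<in> A" "y \<in> A"
        and CD: "C = {z. equivclp P x z}" "D = {z. equivclp P y z}"
        by blast
      moreover assume "equivclp_class_map Q f A C = equivclp_class_map Q f A D"
      ultimately have "{Z. equivclp Q (f x) Z} = {Z. equivclp Q (f y) Z}"
        by (simp add: class_image)
      with \<open>x \<in> A\<close> \<open>y \<in> A\<close> show "C = D"
        unfolding CD by (simp add: equivclp_class_eq_iff reflects)
    qed
    have "equivclp_class_map Q f A ` (\<lambda>x. {y. equivclp P x y}) ` A =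
        (\<lambda>x. {Z. equivclp Q (f x) Z}) ` A"
      unfolding image_image by (rule image_cong) (simp_all add: class_image)
    also have "\<dots> = (\<lambda>Y. {Z. equivclp Q Y Z}) ` B"
    proof (intro equalityI subsetI)
      fix C
      assume "C \<in> (\<lambda>x. {Z. equivclp Q (f x) Z}) ` A"
      with maps show "C \<in> (\<lambda>Y. {Z. equivclp Q Y Z}) ` B" by blast
    next
      fix C
      assume "C \<in> (\<lambda>Y. {Z. equivclp Q Y Z}) ` B"
      then obtain Y x where "x \<in> A" "C = {Z. equivclp Q Y Z}" "equivclp Q Y (f x)"
        using onto by blast
      then show "C \<in> (\<lambda>x. {Z. equivclp Q (f x) Z}) ` A"
        by (simp add: equivclp_class_eq_iff)
    qed
    finally show "equivclp_class_map Q f A ` (\<lambda>x. {y. equivclp P x y}) ` A =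
        (\<lambda>Y. {Z. equivclp Q Y Z}) ` B" .
  qed
qed

definition commensurable :: "('a::zero \<Rightarrow> 'b \<Rightarrow> 'b) \<Rightarrow> 'b \<Rightarrow> 'b \<Rightarrow> bool" where
  "commensurable sc x y \<longleftrightarrow> (\<exists>a b. a \<noteq> 0 \<and> b \<noteq> 0 \<and> sc a x = sc b y)"

lemma equivp_commensurable:
  fixes sc :: "'a::idom \<Rightarrow> 'b::ab_group_add \<Rightarrow> 'b"
  assumes "module sc"
  shows "equivp (commensurable sc)"
proof (rule equivpI)
  interpret module sc by fact
  show "reflp (commensurable sc)"
    unfolding commensurable_def by (intro reflpI exI[of _ 1]) simp
  show "symp (commensurable sc)"
    unfolding symp_def commensurable_def by metis
  show "transp (commensurable sc)"
  proof (rule transpI)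
    fix x y z
    assume "commensurable sc x y" "commensurable sc y z"
    then obtain a b c d where nonzero: "a \<noteq> 0" "b \<noteq> 0" "c \<noteq> 0" "d \<noteq> 0"
      and xy: "sc a x = sc b y" and yz: "sc c y = sc d z"
      unfolding commensurable_def by blast
    have "sc (c * a) x = sc c (sc b y)" by (simp only: xy flip: scale_scale)
    also have "\<dots> = sc b (sc c y)" by (rule scale_left_commute)
    also have "\<dots> = sc (b * d) z" by (simp only: yz scale_scale)
    finally show "commensurable sc x z"
      unfolding commensurable_def using nonzero by (metis mult_eq_0_iff)
  qed
qed

(* Which representative SOME picks is irrelevant: in a torsion-free module all numerators
   of one class are commensurable (commensurable_loc_numerator). *)
definition loc_numerator :: "('b \<times> 'a) set \<Rightarrow> 'b" where
  "loc_numerator X = fst (SOME p. p \<in> X)"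

lemma loc_class_in_carrier: "s \<noteq> 0 \<Longrightarrow> loc_class sc m s \<in> loc_carrier sc"
  unfolding loc_carrier_def loc_class_def by (auto intro: quotientI)

lemma loc_carrierE:
  assumes "X \<in> loc_carrier sc"
  obtains m s where "s \<noteq> 0" "X = loc_class sc m s"
  using assms unfolding loc_carrier_def loc_class_def by (auto elim!: quotientE)

locale torsion_free_module = module sc for sc :: "'a::idom \<Rightarrow> 'b::ab_group_add \<Rightarrow> 'b" +
  assumes torsion_free: "torsion_free sc"
begin

lemma scale_eq_0_iff [simp]: "sc a x = 0 \<longleftrightarrow> a = 0 \<or> x = 0"
  using torsion_free unfolding torsion_free_def by auto

lemma scale_cancel_left [simp]: "sc a x = sc a y \<longleftrightarrow> x = y \<or> a = 0"
  using scale_eq_0_iff[of a "x - y"] by (auto simp: scale_right_diff_distrib)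

lemma commensurable_0_iff [simp]: "commensurable sc 0 y \<longleftrightarrow> y = 0"
  unfolding commensurable_def by (auto intro!: exI[of _ 1])

lemma commensurable_imp_equivclp:
  assumes step: "\<And>a x. a \<noteq> 0 \<Longrightarrow> x \<noteq> 0 \<Longrightarrow> R (f x) (f (sc a x))"
    and "commensurable sc x y"
  shows "equivclp R (f x) (f y)"
proof (cases "x = 0")
  case True
  with assms(2) show ?thesis by simp
next
  case False
  from assms(2) obtain a b where "a \<noteq> 0" "b \<noteq> 0" and eq: "sc a x = sc b y"
    unfolding commensurable_def by blast
  with False have "y \<noteq> 0" by auto
  have "equivclp R (f x) (f (sc a x))" using step \<open>a \<noteq> 0\<close> False by blast
  also have "f (sc a x) = f (sc b y)" by (simp only: eq)
  also have "equivclp R (f (sc b y)) (f y)" using step \<open>b \<noteq> 0\<close> \<open>y \<noteq> 0\<close> by blast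
  finally show ?thesis .
qed

lemma proj_rel_imp_commensurable:
  assumes "proj_rel sc UNIV 0 x y"
  shows "commensurable sc x y"
proof -
  from assms obtain m r s where "x = sc r m" "y = sc s m" "x \<noteq> 0" "y \<noteq> 0"
    unfolding proj_rel_def by fast
  then have "r \<noteq> 0" "s \<noteq> 0" "sc s x = sc r y" by (auto simp: mult.commute)
  then show ?thesis unfolding commensurable_def by blast
qed

lemma proj_rel_scale: "x \<noteq> 0 \<Longrightarrow> a \<noteq> 0 \<Longrightarrow> proj_rel sc UNIV 0 x (sc a x)"
  unfolding proj_rel_def by (metis UNIV_I scale_eq_0_iff scale_one)

lemma equivclp_proj_rel_iff_commensurable:
  "equivclp (proj_rel sc UNIV 0) x y \<longleftrightarrow> commensurable sc x y"
proof
  assume "equivclp (proj_rel sc UNIV 0) x y"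
  then show "commensurable sc x y"
    using proj_rel_imp_commensurable equivp_commensurable[OF module_axioms]
    by (rule equivclp_imp_equivp_image[where f = "\<lambda>x. x"])
next
  assume "commensurable sc x y"
  then show "equivclp (proj_rel sc UNIV 0) x y"
    using commensurable_imp_equivclp[where f = "\<lambda>x. x"] proj_rel_scale by blast
qed

lemma loc_rel_iff:
  "((m, s), (m', s')) \<in> loc_rel sc \<longleftrightarrow> s \<noteq> 0 \<and> s' \<noteq> 0 \<and> sc s' m = sc s m'"
  unfolding loc_rel_def by (auto intro!: exI[of _ 1])

lemma mem_loc_class_iff:
  "(m', s') \<in> loc_class sc m s \<longleftrightarrow> s \<noteq> 0 \<and> s' \<noteq> 0 \<and> sc s' m = sc s m'"
  unfolding loc_class_def by (simp add: loc_rel_iff)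

lemma equiv_loc_rel: "equiv (UNIV \<times> {s. s \<noteq> 0}) (loc_rel sc)"
proof (rule equivI)
  show "loc_rel sc \<subseteq> (UNIV \<times> {s. s \<noteq> 0}) \<times> (UNIV \<times> {s. s \<noteq> 0})"
    unfolding loc_rel_def by auto
  show "refl_on (UNIV \<times> {s. s \<noteq> 0}) (loc_rel sc)"
    unfolding refl_on_def by (auto simp: loc_rel_iff loc_rel_def)
  show "sym (loc_rel sc)"
    unfolding sym_def by (auto simp: loc_rel_iff)
  show "trans (loc_rel sc)"
  proof (rule transI)
    fix p q u
    assume "(p, q) \<in> loc_rel sc" "(q, u) \<in> loc_rel sc"
    then obtain m s m' s' m'' s'' where pu: "p = (m, s)" "u = (m'', s'')"
      and nonzero: "s \<noteq> 0" "s' \<noteq> 0" "s'' \<noteq> 0"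
      and eq: "sc s' m = sc s m'" "sc s'' m' = sc s' m''"
      by (cases p; cases q; cases u) (auto simp: loc_rel_iff)
    have "sc s' (sc s'' m) = sc s' (sc s m'')"
      by (metis eq scale_left_commute)
    with nonzero have "sc s'' m = sc s m''"
      by (metis scale_cancel_left)
    with pu nonzero show "(p, u) \<in> loc_rel sc" by (simp add: loc_rel_iff)
  qed
qed

lemma loc_class_eq_iff:
  "s \<noteq> 0 \<Longrightarrow> s' \<noteq> 0 \<Longrightarrow> loc_class sc m s = loc_class sc m' s' \<longleftrightarrow> sc s' m = sc s m'"
  unfolding loc_class_def
  using eq_equiv_class_iff[OF equiv_loc_rel, of "(m, s)" "(m', s')"] by (simp add: loc_rel_iff)

lemma loc_class_eq_zero_iff: "s \<noteq> 0 \<Longrightarrow> loc_class sc m s = loc_zero sc \<longleftrightarrow> m = 0"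
  unfolding loc_zero_def by (simp add: loc_class_eq_iff)

lemma loc_scale_Fract:
  assumes "s \<noteq> 0" "b \<noteq> 0"
  shows "loc_scale sc (Fract a b) (loc_class sc m s) = loc_class sc (sc a m) (b * s)"
proof -
  have "loc_class sc (sc a' m') (b' * s') = loc_class sc (sc a m) (b * s)"
    if "b' \<noteq> 0" "Fract a b = Fract a' b'" "(m', s') \<in> loc_class sc m s" for a' b' m' s'
  proof -
    from that have "a * b' = a' * b" "s' \<noteq> 0" "sc s' m = sc s m'"
      using assms by (simp_all add: eq_fract mem_loc_class_iff)
    then have "sc (b * s) (sc a' m') = sc (b' * s') (sc a m)"
      by (metis mult.commute scale_scale)
    with assms \<open>b' \<noteq> 0\<close> \<open>s' \<noteq> 0\<close> show ?thesis by (simp add: loc_class_eq_iff)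
  qed
  moreover have "(m, s) \<in> loc_class sc m s"
    using assms by (simp add: mem_loc_class_iff)
  ultimately show ?thesis
    unfolding loc_scale_def using assms(2) by blast
qed

lemma commensurable_loc_numerator:
  assumes "s \<noteq> 0"
  shows "commensurable sc m (loc_numerator (loc_class sc m s))"
proof -
  have "(m, s) \<in> loc_class sc m s"
    using assms by (simp add: mem_loc_class_iff)
  then have "(SOME p. p \<in> loc_class sc m s) \<in> loc_class sc m s"
    by (rule someI)
  then obtain m' s' where "(m', s') \<in> loc_class sc m s"
    and "loc_numerator (loc_class sc m s) = m'"
    unfolding loc_numerator_def by (metis prod.collapse)
  then show ?thesis
    unfolding commensurable_def by (auto simp: mem_loc_class_iff)
qed

abbreviation loc_proj_rel :: "('b \<times> 'a) set \<Rightarrow> ('b \<times> 'a) set \<Rightarrow> bool" where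
  "loc_proj_rel \<equiv> proj_rel (loc_scale sc) (loc_carrier sc) (loc_zero sc)"

lemma loc_proj_rel_scale:
  assumes "X \<in> loc_carrier sc" "X \<noteq> loc_zero sc" "q \<noteq> 0"
  shows "loc_proj_rel X (loc_scale sc q X)"
proof -
  obtain m s where "s \<noteq> 0" and X: "X = loc_class sc m s"
    using assms(1) by (rule loc_carrierE)
  obtain a b where q: "q = Fract a b" "b \<noteq> 0"
    by (cases q)
  with assms(3) have "a \<noteq> 0"
    by (auto simp: Zero_fract_def eq_fract)
  from assms(2) X \<open>s \<noteq> 0\<close> have "m \<noteq> 0"
    by (simp add: loc_class_eq_zero_iff)
  have "loc_scale sc 1 X = X"
    using loc_scale_Fract[of s 1 1 m] \<open>s \<noteq> 0\<close> X by (simp add: One_fract_def)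
  moreover have "loc_scale sc q X = loc_class sc (sc a m) (b * s)"
    using loc_scale_Fract \<open>s \<noteq> 0\<close> q X by simp
  ultimately show ?thesis
    unfolding proj_rel_def
    using assms \<open>s \<noteq> 0\<close> \<open>a \<noteq> 0\<close> \<open>m \<noteq> 0\<close> q(2)
    by (metis loc_class_in_carrier loc_class_eq_zero_iff mult_eq_0_iff scale_eq_0_iff)
qed

lemma loc_proj_rel_imp_commensurable:
  assumes "loc_proj_rel X Y"
  shows "commensurable sc (loc_numerator X) (loc_numerator Y)"
proof -
  from assms obtain M q q' where "M \<in> loc_carrier sc" "X \<noteq> loc_zero sc" "Y \<noteq> loc_zero sc"
    and XY: "X = loc_scale sc q M" "Y = loc_scale sc q' M"
    unfolding proj_rel_def by fast
  obtain m s where "s \<noteq> 0" and M: "M = loc_class sc m s"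
    using \<open>M \<in> loc_carrier sc\<close> by (rule loc_carrierE)
  obtain a b where q: "q = Fract a b" "b \<noteq> 0" by (cases q)
  obtain a' b' where q': "q' = Fract a' b'" "b' \<noteq> 0" by (cases q')
  have X: "X = loc_class sc (sc a m) (b * s)" and Y: "Y = loc_class sc (sc a' m) (b' * s)"
    using XY M q q' \<open>s \<noteq> 0\<close> by (simp_all add: loc_scale_Fract)
  with \<open>X \<noteq> loc_zero sc\<close> \<open>Y \<noteq> loc_zero sc\<close> q(2) q'(2) \<open>s \<noteq> 0\<close>
  have "sc a m \<noteq> 0" "sc a' m \<noteq> 0"
    by (simp_all add: loc_class_eq_zero_iff)
  moreover have "sc a' (sc a m) = sc a (sc a' m)"
    by (rule scale_left_commute)
  ultimately have "commensurable sc (sc a m) (sc a' m)"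
    unfolding commensurable_def by (metis scale_eq_0_iff)
  moreover have "commensurable sc (sc a m) (loc_numerator X)"
    and "commensurable sc (sc a' m) (loc_numerator Y)"
    using X Y q(2) q'(2) \<open>s \<noteq> 0\<close> by (simp_all add: commensurable_loc_numerator)
  ultimately show ?thesis
    using equivp_commensurable[OF module_axioms] by (metis equivp_symp equivp_transp)
qed

lemma equivclp_loc_proj_rel_iff_commensurable:
  "equivclp loc_proj_rel (loc_class sc x 1) (loc_class sc y 1) \<longleftrightarrow> commensurable sc x y"
proof
  have commensurable_equivp: "equivp (commensurable sc)"
    using module_axioms by (rule equivp_commensurable)
  assume "equivclp loc_proj_rel (loc_class sc x 1) (loc_class sc y 1)"
  then have "commensurable sc (loc_numerator (loc_class sc x 1)) (loc_numerator (loc_class sc y 1))"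
    using loc_proj_rel_imp_commensurable commensurable_equivp
    by (rule equivclp_imp_equivp_image)
  then show "commensurable sc x y"
    using commensurable_loc_numerator[of 1] commensurable_equivp
    by (metis equivp_symp equivp_transp one_neq_zero)
next
  have "loc_proj_rel (loc_class sc x 1) (loc_class sc (sc a x) 1)" if "a \<noteq> 0" "x \<noteq> 0" for a x
    using loc_proj_rel_scale[of "loc_class sc x 1" "Fract a 1"] that
    by (simp add: loc_class_in_carrier loc_class_eq_zero_iff loc_scale_Fract Zero_fract_def eq_fract)
  moreover assume "commensurable sc x y"
  ultimately show "equivclp loc_proj_rel (loc_class sc x 1) (loc_class sc y 1)"
    by (rule commensurable_imp_equivclp[where f = "\<lambda>m. loc_class sc m 1"])
qed

lemma loc_proj_rel_clear_denominator:
  assumes "X \<in> loc_carrier sc" "X \<noteq> loc_zero sc"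
  obtains m where "m \<noteq> 0" "loc_proj_rel X (loc_class sc m 1)"
proof -
  obtain m s where "s \<noteq> 0" and X: "X = loc_class sc m s"
    using assms(1) by (rule loc_carrierE)
  with assms(2) have "m \<noteq> 0"
    by (simp add: loc_class_eq_zero_iff)
  have "loc_scale sc (Fract s 1) X = loc_class sc m 1"
    using X \<open>s \<noteq> 0\<close> by (simp add: loc_scale_Fract loc_class_eq_iff)
  moreover have "Fract s 1 \<noteq> 0"
    using \<open>s \<noteq> 0\<close> by (simp add: Zero_fract_def eq_fract)
  ultimately show ?thesis
    using that \<open>m \<noteq> 0\<close> loc_proj_rel_scale[OF assms] by metis
qed

end

theorem theorem4p13:
  fixes sc :: "'a::idom \<Rightarrow> 'b::ab_group_add \<Rightarrow> 'b"
  assumes "module sc"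
    and "torsion_free sc"
  shows "\<exists>F. (\<forall>m. m \<noteq> 0 \<longrightarrow>
              F (proj_class sc UNIV 0 m) =
              proj_class (loc_scale sc) (loc_carrier sc) (loc_zero sc) (loc_class sc m 1))
          \<and> bij_betw F (proj_space sc UNIV 0)
              (proj_space (loc_scale sc) (loc_carrier sc) (loc_zero sc))"
proof -
  interpret torsion_free_module sc
    using assms by (rule torsion_free_module.intro[OF _ torsion_free_module_axioms.intro])
  let ?f = "\<lambda>m. loc_class sc m 1"
  let ?F = "equivclp_class_map loc_proj_rel ?f (UNIV - {0})"
  have maps: "?f ` (UNIV - {0}) \<subseteq> loc_carrier sc - {loc_zero sc}"
    by (auto simp: loc_class_in_carrier loc_class_eq_zero_iff)
  have reflects: "equivclp loc_proj_rel (?f x) (?f y) \<longleftrightarrow> equivclp (proj_rel sc UNIV 0) x y"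
    for x y
    by (simp add: equivclp_loc_proj_rel_iff_commensurable equivclp_proj_rel_iff_commensurable)
  have onto: "\<exists>m\<in>UNIV - {0}. equivclp loc_proj_rel Y (?f m)"
    if "Y \<in> loc_carrier sc - {loc_zero sc}" for Y
    using that by (auto elim: loc_proj_rel_clear_denominator)
  have "?F (proj_class sc UNIV 0 m) = proj_class (loc_scale sc) (loc_carrier sc) (loc_zero sc) (?f m)"
    if "m \<noteq> 0" for m
    unfolding proj_class_def using that reflects by (intro equivclp_class_map_class) auto
  moreover have "bij_betw ?F (proj_space sc UNIV 0)
      (proj_space (loc_scale sc) (loc_carrier sc) (loc_zero sc))"
    unfolding proj_space_def proj_class_def using maps reflects onto
    by (rule bij_betw_equivclp_class_map)
  ultimately show ?thesis by blast
qed

end
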